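(* Let $\mathfrak p=(p,q)\in\mathbb Z_+^2$ and $\Gamma=\Gamma_{\mathfrak p}$. Then $\bigcup_{j=1}^{pq}B_j^\Gamma=[-4,4]$ and $\max B_j^\Gamma\ge\min B_{j+1}^\Gamma$ for every $1\le j<pq$.
   Context: For $r\ge3$ and $\theta\in\mathbb R$, $\Delta_\theta^r\in\mathbb C^{r\times r}$ is the Hermitian matrix with $1$ on the sub- and superdiagonals, $0$ on the diagonal, entry $e^{-i\theta}$ in position $(1,r)$ and $e^{i\theta}$ in position $(r,1)$, all other entries $0$; $\Delta_\theta^1=2\cos\theta$, $\Delta_\theta^2=\begin{bmatrix}0&1+e^{-i\theta}\\1+e^{i\theta}&0\end{bmatrix}$. $\Gamma_{\mathfrak p}=([0,p)\times[0,q))\cap\mathbb Z^2$, $\Delta^{\Gamma}_{\theta,\varphi}=\Delta_\theta^p\otimes I_q+I_p\otimes\Delta_\varphi^q$, with ordered eigenvalues $\lambda_1^\Gamma(\theta,\varphi)\le\cdots\le\lambda_{pq}^\Gamma(\theta,\varphi)$ and bands $B_j^\Gamma=\{\lambda_j^\Gamma(\theta,\varphi):(\theta,\varphi)\in[0,\pi]^2\}$. *)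

theory Defs
  imports "HOL-Analysis.Analysis" "Jordan_Normal_Form.Char_Poly"
    "HOL-Computational_Algebra.Polynomial"
begin

definition Delta :: "nat \<Rightarrow> real \<Rightarrow> complex mat" where
  "Delta r \<theta> =
    (if r = 1 then mat 1 1 (\<lambda>_. complex_of_real (2 * cos \<theta>))
     else if r = 2 then mat 2 2 (\<lambda>(i,j).
        if i = 0 \<and> j = 1 then 1 + cis (- \<theta>)
        else if i = 1 \<and> j = 0 then 1 + cis \<theta> else 0)
     else mat r r (\<lambda>(i,j).
        if j = i + 1 \<or> i = j + 1 then 1
        else if i = 0 \<and> j = r - 1 then cis (- \<theta>)
        else if i = r - 1 \<and> j = 0 then cis \<theta> else 0))"

text \<open>Kronecker product; row index (a,b) of A \<otimes> B is encoded as a * dim_row B + b.\<close>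
definition kron :: "complex mat \<Rightarrow> complex mat \<Rightarrow> complex mat" where
  "kron A B = mat (dim_row A * dim_row B) (dim_col A * dim_col B)
     (\<lambda>(i,j). A $$ (i div dim_row B, j div dim_col B) * B $$ (i mod dim_row B, j mod dim_col B))"

definition DeltaGamma :: "nat \<Rightarrow> nat \<Rightarrow> real \<Rightarrow> real \<Rightarrow> complex mat" where
  "DeltaGamma p q \<theta> \<phi> = kron (Delta p \<theta>) (1\<^sub>m q) + kron (1\<^sub>m p) (Delta q \<phi>)"

text \<open>Eigenvalues of a (Hermitian, hence real-spectrum) matrix, listed with algebraic
  multiplicity in nondecreasing order: the roots of the characteristic polynomial.\<close>
definition ordered_eigenvalues :: "complex mat \<Rightarrow> real list" where
  "ordered_eigenvalues A = sorted_list_of_multiset (image_mset Re (proots (char_poly A)))"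

definition lam :: "nat \<Rightarrow> nat \<Rightarrow> nat \<Rightarrow> real \<Rightarrow> real \<Rightarrow> real" where
  "lam p q j \<theta> \<phi> = ordered_eigenvalues (DeltaGamma p q \<theta> \<phi>) ! (j - 1)"

definition band :: "nat \<Rightarrow> nat \<Rightarrow> nat \<Rightarrow> real set" where
  "band p q j = {lam p q j \<theta> \<phi> | \<theta> \<phi>. \<theta> \<in> {0..pi} \<and> \<phi> \<in> {0..pi}}"

end

theory Submission
  imports Defs
begin

unbundle no vec_syntax

text \<open>All absolute row sums of \<open>\<Delta>^\<Gamma>(\<theta>,\<phi>)\<close> are at most 4, so its eigenvalues lie in
  \<open>[-4,4]\<close> (Gershgorin). Conversely, the plane wave \<open>(e^(i m \<alpha>))\<^sub>m\<close> is an eigenvector of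
  \<open>\<Delta>^r(\<theta>)\<close> with eigenvalue \<open>2 cos \<alpha>\<close> whenever \<open>e^(i r \<alpha>) = e^(i \<theta>)\<close>, and for every
  \<open>\<alpha>\<close> such a twist \<open>\<theta>\<close> can be found in \<open>[0,\<pi>]\<close> after possibly replacing \<open>\<alpha>\<close> by \<open>-\<alpha>\<close>.
  Kronecker products of plane waves therefore realise every \<open>c = 4 cos \<alpha>\<close> as an eigenvalue of
  some \<open>\<Delta>^\<Gamma>(\<theta>,\<phi>)\<close> with \<open>\<theta>, \<phi> \<in> [0,\<pi>]\<close>. This gives the covering, and the overlap
  follows because a point strictly between \<open>max B\<^sub>j\<close> and \<open>min B\<^sub>j\<^sub>+\<^sub>1\<close> would have no
  position in the sorted spectrum.\<close>

definition row_norm_sum :: "'a::real_normed_field mat \<Rightarrow> nat \<Rightarrow> real" where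
  "row_norm_sum A i = (\<Sum>j<dim_col A. norm (A $$ (i,j)))"

lemma eigenvalue_norm_le_row_norm_sum:
  fixes A :: "'a::real_normed_field mat"
  assumes A: "A \<in> carrier_mat n n" and ev: "eigenvalue A z"
    and rows: "\<And>i. i < n \<Longrightarrow> row_norm_sum A i \<le> c"
  shows "norm z \<le> c"
proof -
  obtain v where v: "v \<in> carrier_vec n" "v \<noteq> 0\<^sub>v n" "A *\<^sub>v v = z \<cdot>\<^sub>v v"
    using ev A unfolding eigenvalue_def eigenvector_def by auto
  obtain k where k: "k < n" "v $ k \<noteq> 0"
    using v(1,2) by (metis carrier_vecD eq_vecI index_zero_vec)
  define M where "M = Max ((\<lambda>i. norm (v $ i)) ` {..<n})"
  have M_ge: "norm (v $ j) \<le> M" if "j < n" for j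
    unfolding M_def using that by (intro Max_ge) auto
  have "M \<in> (\<lambda>i. norm (v $ i)) ` {..<n}"
    unfolding M_def using k(1) by (intro Max_in) auto
  then obtain i where i: "i < n" "norm (v $ i) = M"
    by auto
  have M_pos: "M > 0"
    using M_ge[OF k(1)] k(2) by (meson less_le_trans zero_less_norm_iff)
  have row_i: "z * v $ i = (\<Sum>j<n. A $$ (i,j) * v $ j)"
    using arg_cong[OF v(3), of "\<lambda>w. w $ i"] A v(1) i(1)
    by (simp add: scalar_prod_def atLeast0LessThan)
  have "norm z * M = norm (z * v $ i)"
    using i(2) by (simp add: norm_mult)
  also have "\<dots> = norm (\<Sum>j<n. A $$ (i,j) * v $ j)"
    by (simp only: row_i)
  also have "\<dots> \<le> (\<Sum>j<n. norm (A $$ (i,j)) * norm (v $ j))"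
    using norm_sum[of "\<lambda>j. A $$ (i,j) * v $ j" "{..<n}"] by (simp add: norm_mult)
  also have "\<dots> \<le> (\<Sum>j<n. norm (A $$ (i,j)) * M)"
    using M_ge by (intro sum_mono mult_left_mono) auto
  also have "\<dots> = row_norm_sum A i * M"
    using A by (simp add: row_norm_sum_def sum_distrib_right)
  also have "\<dots> \<le> c * M"
    using rows[OF i(1)] M_pos by simp
  finally show ?thesis
    using M_pos by simp
qed

lemma row_norm_sum_add_le:
  assumes "A \<in> carrier_mat n m" "B \<in> carrier_mat n m" "i < n"
  shows "row_norm_sum (A + B) i \<le> row_norm_sum A i + row_norm_sum B i"
proof -
  have "row_norm_sum (A + B) i = (\<Sum>j<m. norm (A $$ (i,j) + B $$ (i,j)))"
    using assms by (simp add: row_norm_sum_def)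
  also have "\<dots> \<le> (\<Sum>j<m. norm (A $$ (i,j)) + norm (B $$ (i,j)))"
    by (intro sum_mono norm_triangle_ineq)
  also have "\<dots> = row_norm_sum A i + row_norm_sum B i"
    using assms by (simp add: row_norm_sum_def sum.distrib)
  finally show ?thesis .
qed

lemma row_norm_sum_one_mat: "i < n \<Longrightarrow> row_norm_sum (1\<^sub>m n :: 'a::real_normed_field mat) i = 1"
proof -
  assume "i < n"
  have "row_norm_sum (1\<^sub>m n :: 'a mat) i = (\<Sum>j<n. if j = i then 1 else 0)"
    unfolding row_norm_sum_def using \<open>i < n\<close> by (intro sum.cong) auto
  then show ?thesis
    using \<open>i < n\<close> by simp
qed

lemma sum_lessThan_mult:
  fixes f :: "nat \<Rightarrow> 'a::comm_monoid_add"
  shows "(\<Sum>j<m*n. f j) = (\<Sum>a<m. \<Sum>b<n. f (a*n + b))"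
proof -
  have "(\<Sum>j\<in>{a*n..<a*n + n}. f j) = (\<Sum>b<n. f (a*n + b))" for a
    using sum.shift_bounds_nat_ivl[of f 0 "a*n" n] by (simp add: atLeast0LessThan add.commute)
  then show ?thesis
    unfolding sum.nat_group[of f n m, symmetric] by simp
qed

lemma mult_add_less_mult: "a < m \<Longrightarrow> b < n \<Longrightarrow> a * n + b < m * (n::nat)"
proof -
  assume "a < m" "b < n"
  then have "a * n + b < Suc a * n"
    by simp
  also have "\<dots> \<le> m * n"
    using \<open>a < m\<close> by (intro mult_le_mono1) simp
  finally show ?thesis .
qed

lemma less_mult_cases:
  fixes i :: nat
  assumes "i < m * n"
  obtains a b where "a < m" "b < n" "i = a * n + b"
proof -
  from assms have "n > 0"
    by (cases n) auto
  with assms have "i div n < m" "i mod n < n"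
    by (simp_all add: less_mult_imp_div_less)
  moreover have "i = i div n * n + i mod n"
    by (rule div_mult_mod_eq[symmetric])
  ultimately show thesis
    by (rule that)
qed

lemma dim_kron [simp]:
  "dim_row (kron A B) = dim_row A * dim_row B" "dim_col (kron A B) = dim_col A * dim_col B"
  unfolding kron_def by (simp_all only: dim_row_mat dim_col_mat)

lemma kron_carrier_mat:
  "A \<in> carrier_mat m m \<Longrightarrow> B \<in> carrier_mat n n \<Longrightarrow> kron A B \<in> carrier_mat (m*n) (m*n)"
  unfolding carrier_mat_def by simp

lemma index_kron_block:
  assumes "A \<in> carrier_mat m m" "B \<in> carrier_mat n n" "a < m" "b < n" "c < m" "d < n"
  shows "kron A B $$ (a*n + b, c*n + d) = A $$ (a, c) * B $$ (b, d)"
proof -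
  have dims: "dim_row A = m" "dim_col A = m" "dim_row B = n" "dim_col B = n"
    using assms(1,2) by auto
  have "a*n + b < m*n" "(a*n + b) div n = a" "(a*n + b) mod n = b"
    "c*n + d < m*n" "(c*n + d) div n = c" "(c*n + d) mod n = d"
    using assms(3-6) by (simp_all add: mult_add_less_mult)
  then show ?thesis
    unfolding kron_def dims by (simp only: index_mat case_prod_conv)
qed

definition kron_vec :: "complex vec \<Rightarrow> complex vec \<Rightarrow> complex vec" where
  "kron_vec x y = vec (dim_vec x * dim_vec y) (\<lambda>i. x $ (i div dim_vec y) * y $ (i mod dim_vec y))"

lemma dim_kron_vec [simp]: "dim_vec (kron_vec x y) = dim_vec x * dim_vec y"
  unfolding kron_vec_def by (rule dim_vec)

lemma kron_vec_carrier: "x \<in> carrier_vec m \<Longrightarrow> y \<in> carrier_vec n \<Longrightarrow> kron_vec x y \<in> carrier_vec (m*n)"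
  unfolding carrier_vec_def by simp

lemma index_kron_vec:
  assumes "x \<in> carrier_vec m" "y \<in> carrier_vec n" "a < m" "b < n"
  shows "kron_vec x y $ (a*n + b) = x $ a * y $ b"
proof -
  have dims: "dim_vec x = m" "dim_vec y = n"
    using assms(1,2) by auto
  have "a*n + b < m*n" "(a*n + b) div n = a" "(a*n + b) mod n = b"
    using assms(3,4) by (simp_all add: mult_add_less_mult)
  then show ?thesis
    unfolding kron_vec_def dims by (simp only: index_vec)
qed

lemma kron_vec_smult_left: "kron_vec (c \<cdot>\<^sub>v x) y = c \<cdot>\<^sub>v kron_vec x y"
proof (rule eq_vecI)
  fix i assume "i < dim_vec (c \<cdot>\<^sub>v kron_vec x y)"
  then have "i < dim_vec x * dim_vec y"
    by simp
  then obtain a b where ab: "a < dim_vec x" "b < dim_vec y" and i: "i = a * dim_vec y + b"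
    by (rule less_mult_cases)
  have x: "x \<in> carrier_vec (dim_vec x)" and cx: "c \<cdot>\<^sub>v x \<in> carrier_vec (dim_vec x)"
    and y: "y \<in> carrier_vec (dim_vec y)"
    by auto
  show "kron_vec (c \<cdot>\<^sub>v x) y $ i = (c \<cdot>\<^sub>v kron_vec x y) $ i"
    using index_kron_vec[OF cx y ab] index_kron_vec[OF x y ab] mult_add_less_mult[OF ab] ab
    unfolding i by (simp add: mult.assoc)
qed simp

lemma kron_vec_smult_right: "kron_vec x (c \<cdot>\<^sub>v y) = c \<cdot>\<^sub>v kron_vec x y"
proof (rule eq_vecI)
  fix i assume "i < dim_vec (c \<cdot>\<^sub>v kron_vec x y)"
  then have "i < dim_vec x * dim_vec y"
    by simp
  then obtain a b where ab: "a < dim_vec x" "b < dim_vec y" and i: "i = a * dim_vec y + b"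
    by (rule less_mult_cases)
  have x: "x \<in> carrier_vec (dim_vec x)" and y: "y \<in> carrier_vec (dim_vec y)"
    and cy: "c \<cdot>\<^sub>v y \<in> carrier_vec (dim_vec y)"
    by auto
  show "kron_vec x (c \<cdot>\<^sub>v y) $ i = (c \<cdot>\<^sub>v kron_vec x y) $ i"
    using index_kron_vec[OF x cy ab] index_kron_vec[OF x y ab] mult_add_less_mult[OF ab] ab
    unfolding i by (simp add: mult.left_commute)
qed simp

lemma row_norm_sum_kron:
  assumes A: "A \<in> carrier_mat m m" and B: "B \<in> carrier_mat n n" and "a < m" "b < n"
  shows "row_norm_sum (kron A B) (a*n + b) = row_norm_sum A a * row_norm_sum B b"
proof -
  have "row_norm_sum (kron A B) (a*n + b) = (\<Sum>c<m. \<Sum>d<n. norm (kron A B $$ (a*n + b, c*n + d)))"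
    using A B by (simp add: row_norm_sum_def sum_lessThan_mult)
  also have "\<dots> = (\<Sum>c<m. \<Sum>d<n. norm (A $$ (a, c)) * norm (B $$ (b, d)))"
    using assms by (intro sum.cong refl) (simp add: index_kron_block[OF A B] norm_mult)
  also have "\<dots> = row_norm_sum A a * row_norm_sum B b"
    using A B by (simp add: row_norm_sum_def sum_product)
  finally show ?thesis .
qed

lemma kron_mult_kron_vec:
  assumes A: "A \<in> carrier_mat m m" and B: "B \<in> carrier_mat n n"
    and x: "x \<in> carrier_vec m" and y: "y \<in> carrier_vec n"
  shows "kron A B *\<^sub>v kron_vec x y = kron_vec (A *\<^sub>v x) (B *\<^sub>v y)"
proof (rule eq_vecI)
  fix i assume "i < dim_vec (kron_vec (A *\<^sub>v x) (B *\<^sub>v y))"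
  then have "i < m * n"
    using A B by simp
  then obtain a b where ab: "a < m" "b < n" and i: "i = a*n + b"
    by (rule less_mult_cases)
  have "(kron A B *\<^sub>v kron_vec x y) $ i = (\<Sum>j<m*n. kron A B $$ (i,j) * kron_vec x y $ j)"
    using A B x y ab i mult_add_less_mult[OF ab] by (simp add: scalar_prod_def atLeast0LessThan)
  also have "\<dots> = (\<Sum>c<m. \<Sum>d<n. (A $$ (a, c) * x $ c) * (B $$ (b, d) * y $ d))"
    unfolding sum_lessThan_mult i using ab x y
    by (intro sum.cong refl) (simp add: index_kron_block[OF A B] index_kron_vec[OF x y])
  also have "\<dots> = (\<Sum>c<m. A $$ (a, c) * x $ c) * (\<Sum>d<n. B $$ (b, d) * y $ d)"
    by (simp add: sum_product)
  also have "\<dots> = kron_vec (A *\<^sub>v x) (B *\<^sub>v y) $ i"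
    using A B x y ab index_kron_vec[of "A *\<^sub>v x" m "B *\<^sub>v y" n a b] unfolding i
    by (simp add: scalar_prod_def atLeast0LessThan)
  finally show "(kron A B *\<^sub>v kron_vec x y) $ i = kron_vec (A *\<^sub>v x) (B *\<^sub>v y) $ i" .
qed simp

lemma kron_sum_mult_kron_vec:
  assumes A: "A \<in> carrier_mat m m" and B: "B \<in> carrier_mat n n"
    and x: "x \<in> carrier_vec m" and y: "y \<in> carrier_vec n"
    and eig_x: "A *\<^sub>v x = a \<cdot>\<^sub>v x" and eig_y: "B *\<^sub>v y = b \<cdot>\<^sub>v y"
  shows "(kron A (1\<^sub>m n) + kron (1\<^sub>m m) B) *\<^sub>v kron_vec x y = (a + b) \<cdot>\<^sub>v kron_vec x y"
proof -
  have "(kron A (1\<^sub>m n) + kron (1\<^sub>m m) B) *\<^sub>v kron_vec x y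
      = kron A (1\<^sub>m n) *\<^sub>v kron_vec x y + kron (1\<^sub>m m) B *\<^sub>v kron_vec x y"
    by (rule add_mult_distrib_mat_vec[OF kron_carrier_mat[OF A one_carrier_mat]
          kron_carrier_mat[OF one_carrier_mat B] kron_vec_carrier[OF x y]])
  also have "\<dots> = kron_vec (a \<cdot>\<^sub>v x) y + kron_vec x (b \<cdot>\<^sub>v y)"
    using x y eig_x eig_y
    by (simp add: kron_mult_kron_vec[OF A one_carrier_mat x y] kron_mult_kron_vec[OF one_carrier_mat B x y])
  also have "\<dots> = a \<cdot>\<^sub>v kron_vec x y + b \<cdot>\<^sub>v kron_vec x y"
    by (simp add: kron_vec_smult_left kron_vec_smult_right)
  also have "\<dots> = (a + b) \<cdot>\<^sub>v kron_vec x y"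
    by (simp add: add_smult_distrib_vec)
  finally show ?thesis .
qed

lemma cis_add_cis_uminus: "cis a + cis (-a) = complex_of_real (2 * cos a)"
  by (simp add: complex_eq_iff)

lemma cis_add_cis_diff: "cis (x + a) + cis (x - a) = complex_of_real (2 * cos a) * cis x"
  by (simp add: complex_eq_iff cos_add cos_diff sin_add sin_diff algebra_simps)

lemma Delta_carrier: "r \<ge> 1 \<Longrightarrow> Delta r \<theta> \<in> carrier_mat r r"
  unfolding Delta_def by auto

text \<open>All three cases of the definition are one twisted cycle: row \<open>i\<close> has the entry \<open>1\<close>
  at its cyclic successor and predecessor, except that wrapping around the cycle costs a factor
  \<open>e^(\<plusminus>i\<theta>)\<close>. For \<open>r \<le> 2\<close> successor and predecessor coincide and the two summands add up.\<close>

lemma index_Delta: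
  assumes "r \<ge> 1" "i < r" "j < r"
  shows "Delta r \<theta> $$ (i,j) =
    (if j = (if i + 1 < r then i + 1 else 0) then (if i + 1 < r then 1 else cis \<theta>) else 0) +
    (if j = (if 0 < i then i - 1 else r - 1) then (if 0 < i then 1 else cis (-\<theta>)) else 0)"
proof -
  consider "r = 1" | "r = 2" | "r \<ge> 3"
    using assms(1) by linarith
  then show ?thesis
  proof cases
    case 1
    then show ?thesis
      using assms(2,3) by (simp add: Delta_def cis_add_cis_uminus)
  next
    case 2
    then consider "i = 0" "j = 0" | "i = 0" "j = 1" | "i = 1" "j = 0" | "i = 1" "j = 1"
      using assms(2,3) by linarith
    then show ?thesis
      using 2 by cases (simp_all add: Delta_def add.commute)
  next
    case 3
    then show ?thesis
      using assms(2,3) by (auto simp: Delta_def)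
  qed
qed

lemma Delta_mult_vec_nth:
  assumes r: "r \<ge> 1" and v: "v \<in> carrier_vec r" and i: "i < r"
  shows "(Delta r \<theta> *\<^sub>v v) $ i =
    (if i + 1 < r then v $ (i + 1) else cis \<theta> * v $ 0) +
    (if 0 < i then v $ (i - 1) else cis (-\<theta>) * v $ (r - 1))"
proof -
  have "(Delta r \<theta> *\<^sub>v v) $ i = (\<Sum>j<r. Delta r \<theta> $$ (i,j) * v $ j)"
    using carrier_matD[OF Delta_carrier[OF r]] v i by (simp add: scalar_prod_def atLeast0LessThan)
  also have "\<dots> = (\<Sum>j<r.
      (if j = (if i + 1 < r then i + 1 else 0) then (if i + 1 < r then 1 else cis \<theta>) * v $ j else 0) +
      (if j = (if 0 < i then i - 1 else r - 1) then (if 0 < i then 1 else cis (-\<theta>)) * v $ j else 0))"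
    using r i by (intro sum.cong refl) (simp add: index_Delta distrib_right)
  also have "\<dots> = (if i + 1 < r then v $ (i + 1) else cis \<theta> * v $ 0) +
      (if 0 < i then v $ (i - 1) else cis (-\<theta>) * v $ (r - 1))"
    using r i by (simp add: sum.distrib)
  finally show ?thesis .
qed

lemma Delta_row_norm_sum_le:
  assumes r: "r \<ge> 1" and i: "i < r"
  shows "row_norm_sum (Delta r \<theta>) i \<le> 2"
proof -
  define succ where "succ = (if i + 1 < r then i + 1 else 0)"
  define pred where "pred = (if 0 < i then i - 1 else r - 1)"
  have "row_norm_sum (Delta r \<theta>) i \<le> (\<Sum>j<r. (if j = succ then 1 else 0) + (if j = pred then 1 else 0))"
    unfolding row_norm_sum_def carrier_matD(2)[OF Delta_carrier[OF r]]
  proof (rule sum_mono)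
    fix j assume "j \<in> {..<r}"
    then have "Delta r \<theta> $$ (i,j) =
        (if j = succ then (if i + 1 < r then 1 else cis \<theta>) else 0) +
        (if j = pred then (if 0 < i then 1 else cis (-\<theta>)) else 0)"
      using r i unfolding succ_def pred_def by (simp add: index_Delta)
    then show "norm (Delta r \<theta> $$ (i,j)) \<le> (if j = succ then 1 else 0) + (if j = pred then 1 else 0)"
      by (auto intro!: order_trans[OF norm_triangle_ineq])
  qed
  also have "\<dots> = 2"
    using r i unfolding succ_def pred_def by (simp add: sum.distrib less_imp_diff_less)
  finally show ?thesis .
qed

definition plane_wave :: "nat \<Rightarrow> real \<Rightarrow> complex vec" where
  "plane_wave r \<alpha> = vec r (\<lambda>m. cis (real m * \<alpha>))"

lemma dim_plane_wave [simp]: "dim_vec (plane_wave r \<alpha>) = r"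
  unfolding plane_wave_def by (rule dim_vec)

lemma plane_wave_carrier: "plane_wave r \<alpha> \<in> carrier_vec r"
  unfolding carrier_vec_def by simp

lemma index_plane_wave: "m < r \<Longrightarrow> plane_wave r \<alpha> $ m = cis (real m * \<alpha>)"
  unfolding plane_wave_def by (rule index_vec)

lemma Delta_mult_plane_wave:
  assumes r: "r \<ge> 1" and twist: "cis (real r * \<alpha>) = cis \<theta>"
  shows "Delta r \<theta> *\<^sub>v plane_wave r \<alpha> = complex_of_real (2 * cos \<alpha>) \<cdot>\<^sub>v plane_wave r \<alpha>"
proof (rule eq_vecI)
  let ?w = "plane_wave r \<alpha>"
  fix i assume "i < dim_vec (complex_of_real (2 * cos \<alpha>) \<cdot>\<^sub>v ?w)"
  then have i: "i < r"
    by simp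
  have succ: "(if i + 1 < r then ?w $ (i + 1) else cis \<theta> * ?w $ 0) = cis (real i * \<alpha> + \<alpha>)"
  proof (cases "i + 1 < r")
    case True
    then show ?thesis
      by (simp add: index_plane_wave algebra_simps)
  next
    case False
    then have "real r = real i + 1"
      using i by simp
    then show ?thesis
      using False r twist by (simp add: index_plane_wave algebra_simps)
  qed
  have pred: "(if 0 < i then ?w $ (i - 1) else cis (-\<theta>) * ?w $ (r - 1)) = cis (real i * \<alpha> - \<alpha>)"
  proof (cases "0 < i")
    case True
    then show ?thesis
      using i by (simp add: index_plane_wave of_nat_diff algebra_simps)
  next
    case False
    have "cis (-\<theta>) * cis (real (r - 1) * \<alpha>) = cis (-\<theta>) * cis (real r * \<alpha>) * cis (-\<alpha>)"
      using r by (simp add: cis_mult of_nat_diff algebra_simps)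
    also have "\<dots> = cis (-\<alpha>)"
      unfolding twist by (simp add: cis_mult)
    finally show ?thesis
      using False r by (simp add: index_plane_wave)
  qed
  have "(Delta r \<theta> *\<^sub>v ?w) $ i = cis (real i * \<alpha> + \<alpha>) + cis (real i * \<alpha> - \<alpha>)"
    unfolding Delta_mult_vec_nth[OF r plane_wave_carrier i] succ pred ..
  also have "\<dots> = complex_of_real (2 * cos \<alpha>) * cis (real i * \<alpha>)"
    by (rule cis_add_cis_diff)
  also have "\<dots> = (complex_of_real (2 * cos \<alpha>) \<cdot>\<^sub>v ?w) $ i"
    using i by (simp add: index_plane_wave)
  finally show "(Delta r \<theta> *\<^sub>v ?w) $ i = (complex_of_real (2 * cos \<alpha>) \<cdot>\<^sub>v ?w) $ i" .
qed (simp add: carrier_matD[OF Delta_carrier[OF r]])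

lemma DeltaGamma_carrier:
  "p \<ge> 1 \<Longrightarrow> q \<ge> 1 \<Longrightarrow> DeltaGamma p q \<theta> \<phi> \<in> carrier_mat (p*q) (p*q)"
  unfolding DeltaGamma_def by (intro add_carrier_mat kron_carrier_mat Delta_carrier one_carrier_mat)

lemma DeltaGamma_row_norm_sum_le:
  assumes p: "p \<ge> 1" and q: "q \<ge> 1" and i: "i < p*q"
  shows "row_norm_sum (DeltaGamma p q \<theta> \<phi>) i \<le> 4"
proof -
  obtain a b where ab: "a < p" "b < q" and i_eq: "i = a*q + b"
    using i by (rule less_mult_cases)
  have "row_norm_sum (DeltaGamma p q \<theta> \<phi>) i
      \<le> row_norm_sum (kron (Delta p \<theta>) (1\<^sub>m q)) i + row_norm_sum (kron (1\<^sub>m p) (Delta q \<phi>)) i"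
    unfolding DeltaGamma_def
    by (rule row_norm_sum_add_le[OF kron_carrier_mat[OF Delta_carrier[OF p] one_carrier_mat]
          kron_carrier_mat[OF one_carrier_mat Delta_carrier[OF q]] i])
  also have "\<dots> = row_norm_sum (Delta p \<theta>) a + row_norm_sum (Delta q \<phi>) b"
    unfolding i_eq using ab
    by (simp add: row_norm_sum_kron[OF Delta_carrier[OF p] one_carrier_mat]
        row_norm_sum_kron[OF one_carrier_mat Delta_carrier[OF q]] row_norm_sum_one_mat)
  also have "\<dots> \<le> 2 + 2"
    using ab by (intro add_mono Delta_row_norm_sum_le p q)
  finally show ?thesis
    by simp
qed

lemma DeltaGamma_eigenvalue:
  assumes p: "p \<ge> 1" and q: "q \<ge> 1"
    and twist_p: "cis (real p * \<alpha>) = cis \<theta>" and twist_q: "cis (real q * \<beta>) = cis \<phi>"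
  shows "eigenvalue (DeltaGamma p q \<theta> \<phi>) (complex_of_real (2 * cos \<alpha> + 2 * cos \<beta>))"
proof -
  let ?v = "kron_vec (plane_wave p \<alpha>) (plane_wave q \<beta>)"
  have v: "?v \<in> carrier_vec (p*q)"
    by (intro kron_vec_carrier plane_wave_carrier)
  have "?v $ 0 = 1"
    using index_kron_vec[of "plane_wave p \<alpha>" p "plane_wave q \<beta>" q 0 0] plane_wave_carrier p q
    by (simp add: index_plane_wave)
  then have "?v \<noteq> 0\<^sub>v (p*q)"
    using p q by (auto simp: zero_vec_def)
  moreover have "DeltaGamma p q \<theta> \<phi> *\<^sub>v ?v = complex_of_real (2 * cos \<alpha> + 2 * cos \<beta>) \<cdot>\<^sub>v ?v"
    unfolding DeltaGamma_def
    using kron_sum_mult_kron_vec[OF Delta_carrier[OF p] Delta_carrier[OF q] plane_wave_carrier plane_wave_carrier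
        Delta_mult_plane_wave[OF p twist_p] Delta_mult_plane_wave[OF q twist_q]]
    by simp
  ultimately have "eigenvector (DeltaGamma p q \<theta> \<phi>) ?v (complex_of_real (2 * cos \<alpha> + 2 * cos \<beta>))"
    using v carrier_matD(1)[OF DeltaGamma_carrier[OF p q]] unfolding eigenvector_def by simp
  then show ?thesis
    unfolding eigenvalue_def by blast
qed

lemma DeltaGamma_eigenvalue_norm_le:
  assumes "p \<ge> 1" "q \<ge> 1" "eigenvalue (DeltaGamma p q \<theta> \<phi>) z"
  shows "norm z \<le> 4"
  using eigenvalue_norm_le_row_norm_sum[OF DeltaGamma_carrier assms(3) DeltaGamma_row_norm_sum_le] assms(1,2)
  by blast

lemma exists_twist_in_0_pi:
  "\<exists>\<theta>\<in>{0..pi}. \<exists>\<beta>. cos \<beta> = cos \<alpha> \<and> cis (real r * \<beta>) = cis \<theta>"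
proof -
  define t where "t = Arg (cis (real r * \<alpha>))"
  have t: "cis t = cis (real r * \<alpha>)" "-pi < t" "t \<le> pi"
    unfolding t_def using cis_Arg[of "cis (real r * \<alpha>)"] Arg_bounded by auto
  show ?thesis
  proof (cases "0 \<le> t")
    case True
    then show ?thesis
      using t by (intro bexI[of _ t] exI[of _ \<alpha>]) auto
  next
    case False
    have "cis (real r * - \<alpha>) = cnj (cis t)"
      unfolding t(1) by (simp add: cis_cnj)
    also have "\<dots> = cis (- t)"
      by (rule cis_cnj)
    finally show ?thesis
      using False t(2) by (intro bexI[of _ "-t"] exI[of _ "-\<alpha>"]) auto
  qed
qed

lemma length_ordered_eigenvalues:
  "A \<in> carrier_mat n n \<Longrightarrow> length (ordered_eigenvalues A) = n"
  unfolding ordered_eigenvalues_def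
  by (metis degree_monic_char_poly mset_sorted_list_of_multiset size_image_mset size_mset size_proots_complex)

lemma sorted_ordered_eigenvalues: "sorted (ordered_eigenvalues A)"
  unfolding ordered_eigenvalues_def by simp

lemma set_ordered_eigenvalues:
  assumes A: "A \<in> carrier_mat n n"
  shows "set (ordered_eigenvalues A) = Re ` {z. eigenvalue A z}"
proof -
  have "char_poly A \<noteq> 0"
    using degree_monic_char_poly[OF A] by auto
  then show ?thesis
    unfolding ordered_eigenvalues_def by (simp add: eigenvalue_root_char_poly[OF A])
qed

lemma ordered_eigenvalues_DeltaGamma_subset:
  assumes "p \<ge> 1" "q \<ge> 1"
  shows "set (ordered_eigenvalues (DeltaGamma p q \<theta> \<phi>)) \<subseteq> {-4..4}"
proof
  fix x assume "x \<in> set (ordered_eigenvalues (DeltaGamma p q \<theta> \<phi>))"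
  then obtain z where "eigenvalue (DeltaGamma p q \<theta> \<phi>) z" "x = Re z"
    unfolding set_ordered_eigenvalues[OF DeltaGamma_carrier[OF assms]] by blast
  then have "\<bar>x\<bar> \<le> 4"
    using DeltaGamma_eigenvalue_norm_le[OF assms] abs_Re_le_cmod[of z] by fastforce
  then show "x \<in> {-4..4}"
    by auto
qed

lemma ordered_eigenvalues_DeltaGamma_cover:
  assumes p: "p \<ge> 1" and q: "q \<ge> 1" and c: "c \<in> {-4..4}"
  shows "\<exists>\<theta>\<in>{0..pi}. \<exists>\<phi>\<in>{0..pi}. c \<in> set (ordered_eigenvalues (DeltaGamma p q \<theta> \<phi>))"
proof -
  define \<alpha> where "\<alpha> = arccos (c / 4)"
  have cos_\<alpha>: "cos \<alpha> = c / 4"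
    unfolding \<alpha>_def using c by (intro cos_arccos) auto
  obtain \<theta> \<alpha>\<^sub>1 where \<theta>: "\<theta> \<in> {0..pi}" "cos \<alpha>\<^sub>1 = cos \<alpha>" "cis (real p * \<alpha>\<^sub>1) = cis \<theta>"
    using exists_twist_in_0_pi by blast
  obtain \<phi> \<alpha>\<^sub>2 where \<phi>: "\<phi> \<in> {0..pi}" "cos \<alpha>\<^sub>2 = cos \<alpha>" "cis (real q * \<alpha>\<^sub>2) = cis \<phi>"
    using exists_twist_in_0_pi by blast
  have "eigenvalue (DeltaGamma p q \<theta> \<phi>) (complex_of_real (2 * cos \<alpha>\<^sub>1 + 2 * cos \<alpha>\<^sub>2))"
    by (rule DeltaGamma_eigenvalue[OF p q \<theta>(3) \<phi>(3)])
  moreover have "2 * cos \<alpha>\<^sub>1 + 2 * cos \<alpha>\<^sub>2 = c"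
    using \<theta>(2) \<phi>(2) cos_\<alpha> by simp
  ultimately have "c \<in> Re ` {z. eigenvalue (DeltaGamma p q \<theta> \<phi>) z}"
    by (metis Re_complex_of_real image_eqI mem_Collect_eq)
  then show ?thesis
    using \<theta>(1) \<phi>(1) unfolding set_ordered_eigenvalues[OF DeltaGamma_carrier[OF p q]] by blast
qed

lemma UN_nth_image_eq:
  assumes len: "\<And>t. t \<in> T \<Longrightarrow> length (L t) = n"
    and sub: "\<And>t. t \<in> T \<Longrightarrow> set (L t) \<subseteq> S"
    and cover: "\<And>c. c \<in> S \<Longrightarrow> \<exists>t\<in>T. c \<in> set (L t)"
  shows "(\<Union>k<n. (\<lambda>t. L t ! k) ` T) = S"
proof
  show "(\<Union>k<n. (\<lambda>t. L t ! k) ` T) \<subseteq> S"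
  proof (intro UN_least image_subsetI)
    fix k t assume "k \<in> {..<n}" "t \<in> T"
    then show "L t ! k \<in> S"
      using sub[of t] nth_mem[of k "L t"] len[of t] by auto
  qed
  show "S \<subseteq> (\<Union>k<n. (\<lambda>t. L t ! k) ` T)"
  proof
    fix c assume "c \<in> S"
    then obtain t k where "t \<in> T" "k < length (L t)" "L t ! k = c"
      using cover by (metis in_set_conv_nth)
    then show "c \<in> (\<Union>k<n. (\<lambda>t. L t ! k) ` T)"
      using len by auto
  qed
qed

lemma sorted_nth_image_Inf_le_Sup:
  fixes L :: "'a \<Rightarrow> real list"
  assumes sorted: "\<And>t. t \<in> T \<Longrightarrow> sorted (L t)"
    and len: "\<And>t. t \<in> T \<Longrightarrow> length (L t) = n"
    and sub: "\<And>t. t \<in> T \<Longrightarrow> set (L t) \<subseteq> {a..b}"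
    and cover: "\<And>c. c \<in> {a..b} \<Longrightarrow> \<exists>t\<in>T. c \<in> set (L t)"
    and "a \<le> b" and k: "Suc k < n"
  shows "Inf ((\<lambda>t. L t ! Suc k) ` T) \<le> Sup ((\<lambda>t. L t ! k) ` T)"
proof (rule ccontr)
  let ?lo = "(\<lambda>t. L t ! k) ` T" and ?hi = "(\<lambda>t. L t ! Suc k) ` T"
  assume "\<not> ?thesis"
  then have gap: "Sup ?lo < Inf ?hi"
    by simp
  have in_ab: "L t ! j \<in> {a..b}" if "t \<in> T" "j < n" for t j
    using sub[OF that(1)] nth_mem[of j "L t"] len[OF that(1)] that(2) by blast
  obtain t\<^sub>0 where "t\<^sub>0 \<in> T"
    using cover[of a] \<open>a \<le> b\<close> by auto
  have bdd_lo: "bdd_above ?lo" and bdd_hi: "bdd_below ?hi"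
    using in_ab k by (auto intro!: bdd_aboveI[of _ b] bdd_belowI[of _ a])
  have "a \<le> Sup ?lo"
    using in_ab[OF \<open>t\<^sub>0 \<in> T\<close>, of k] k cSup_upper[OF _ bdd_lo, of "L t\<^sub>0 ! k"] \<open>t\<^sub>0 \<in> T\<close> by auto
  moreover have "Inf ?hi \<le> b"
    using in_ab[OF \<open>t\<^sub>0 \<in> T\<close>, of "Suc k"] k cInf_lower[OF _ bdd_hi, of "L t\<^sub>0 ! Suc k"] \<open>t\<^sub>0 \<in> T\<close> by auto
  ultimately obtain t i where t: "t \<in> T" "i < n" "L t ! i = (Sup ?lo + Inf ?hi) / 2"
    using cover[of "(Sup ?lo + Inf ?hi) / 2"] gap len by (fastforce simp: in_set_conv_nth)
  show False
  proof (cases "i \<le> k")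
    case True
    then have "L t ! i \<le> Sup ?lo"
      using sorted_nth_mono[OF sorted[OF t(1)] True] len[OF t(1)] k t(1)
        cSup_upper[OF _ bdd_lo, of "L t ! k"] by force
    then show False
      using t(3) gap by simp
  next
    case False
    then have "Inf ?hi \<le> L t ! i"
      using sorted_nth_mono[OF sorted[OF t(1)], of "Suc k" i] len[OF t(1)] t(1,2)
        cInf_lower[OF _ bdd_hi, of "L t ! Suc k"] by force
    then show False
      using t(3) gap by simp
  qed
qed

lemma band_Suc_eq_image:
  "band p q (Suc k) =
    (\<lambda>t. (case t of (\<theta>, \<phi>) \<Rightarrow> ordered_eigenvalues (DeltaGamma p q \<theta> \<phi>)) ! k) ` ({0..pi} \<times> {0..pi})"
  unfolding band_def lam_def by force

theorem mainTheorem12: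
  fixes p q :: nat
  assumes "p \<ge> 1" and "q \<ge> 1"
  shows "(\<Union>j\<in>{1..p*q}. band p q j) = {-4..4}
    \<and> (\<forall>j. 1 \<le> j \<and> j < p * q \<longrightarrow> Sup (band p q j) \<ge> Inf (band p q (j+1)))"
proof -
  define L where "L = (\<lambda>t. case t of (\<theta>, \<phi>) \<Rightarrow> ordered_eigenvalues (DeltaGamma p q \<theta> \<phi>))"
  define T where "T = {0..pi} \<times> {0..pi}"
  have len: "length (L t) = p * q" and sorted: "sorted (L t)" and sub: "set (L t) \<subseteq> {-4..4}" for t
    using length_ordered_eigenvalues[OF DeltaGamma_carrier[OF assms]] sorted_ordered_eigenvalues
      ordered_eigenvalues_DeltaGamma_subset[OF assms] by (cases t, simp add: L_def)+
  have cover: "\<exists>t\<in>T. c \<in> set (L t)" if "c \<in> {-4..4}" for c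
    using ordered_eigenvalues_DeltaGamma_cover[OF assms that] unfolding L_def T_def by auto
  have "(\<Union>j\<in>{1..p*q}. band p q j) = (\<Union>k<p*q. (\<lambda>t. L t ! k) ` T)"
    unfolding image_Suc_lessThan[symmetric] L_def T_def by (simp add: band_Suc_eq_image)
  also have "\<dots> = {-4..4}"
    using len sub cover by (rule UN_nth_image_eq)
  finally have "(\<Union>j\<in>{1..p*q}. band p q j) = {-4..4}" .
  moreover have "Sup (band p q (Suc k)) \<ge> Inf (band p q (Suc k + 1))" if "Suc k < p * q" for k
    using sorted_nth_image_Inf_le_Sup[where k = k, OF sorted len sub cover] that
    unfolding L_def T_def by (simp add: band_Suc_eq_image)
  ultimately show ?thesis
    by (metis Suc_le_D One_nat_def)
qed

end
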